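(* An $S$-claw $\mathcal{F}=(f_s:I_s\to[n]\mid s\in S)$ in $\Delta$ is strongly biCartesian if and only if it is compatible.
   Context: $\Delta$: simplex category of nonempty finite linear orders $[n]$ and weakly monotone maps. An $S$-claw on $[n]$ ($S$ finite) is a family of morphisms $f_s:I_s\to[n]$. It is strongly biCartesian if it extends to an $S$-cube $Q:\mathcal{P}(S)^{\mathrm{op}}\to\Delta$ ($\mathcal{P}(S)$ the subset poset) with $Q(\emptyset)=[n]$, $Q(\{s\})\to Q(\emptyset)$ equal to $f_s$, such that every square $Q(T\cup\{s,s'\})\to Q(T\cup\{s\}),Q(T\cup\{s'\})\to Q(T)$ ($s\neq s'\notin T$) is both a pullback and a pushout in $\Delta$. It is compatible if (BC1) for each $i\in[n]$ at most one $s$ has $f_s^{-1}\{i\}$ not a singleton, and (BC2) for each $0<i\le n$ at most one $s$ has $\{i-1,i\}\not\subseteq f_s(I_s)$. *)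

theory Defs
  imports Main
begin

text \<open>The object [n] is represented by the natural number n,
  standing for the linear order {0..n}. A morphism [m] \<rightarrow> [n] is a function
  nat \<Rightarrow> nat that is weakly monotone on {0..m} and maps {0..m} into {0..n};
  values outside {0..m} are irrelevant, so equality of morphisms [m] \<rightarrow> [n] is
  pointwise equality on {0..m}.\<close>

definition dhom :: "nat \<Rightarrow> nat \<Rightarrow> (nat \<Rightarrow> nat) \<Rightarrow> bool" where
  "dhom m n f \<longleftrightarrow> (\<forall>i\<le>m. f i \<le> n) \<and> (\<forall>i j. i \<le> j \<longrightarrow> j \<le> m \<longrightarrow> f i \<le> f j)"

definition deq :: "nat \<Rightarrow> (nat \<Rightarrow> nat) \<Rightarrow> (nat \<Rightarrow> nat) \<Rightarrow> bool" where
  "deq m f g \<longleftrightarrow> (\<forall>i\<le>m. f i = g i)"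

definition is_pullback ::
  "nat \<Rightarrow> nat \<Rightarrow> nat \<Rightarrow> nat \<Rightarrow> (nat \<Rightarrow> nat) \<Rightarrow> (nat \<Rightarrow> nat) \<Rightarrow> (nat \<Rightarrow> nat) \<Rightarrow> (nat \<Rightarrow> nat) \<Rightarrow> bool" where
  "is_pullback A B C D a a' g h \<longleftrightarrow>
     (\<forall>k u v. dhom k B u \<longrightarrow> dhom k C v \<longrightarrow> deq k (g \<circ> u) (h \<circ> v) \<longrightarrow>
        (\<exists>w. dhom k A w \<and> deq k (a \<circ> w) u \<and> deq k (a' \<circ> w) v) \<and>
        (\<forall>w w'. dhom k A w \<longrightarrow> deq k (a \<circ> w) u \<longrightarrow> deq k (a' \<circ> w) v \<longrightarrow>
                dhom k A w' \<longrightarrow> deq k (a \<circ> w') u \<longrightarrow> deq k (a' \<circ> w') v \<longrightarrow> deq k w w'))"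

definition is_pushout ::
  "nat \<Rightarrow> nat \<Rightarrow> nat \<Rightarrow> nat \<Rightarrow> (nat \<Rightarrow> nat) \<Rightarrow> (nat \<Rightarrow> nat) \<Rightarrow> (nat \<Rightarrow> nat) \<Rightarrow> (nat \<Rightarrow> nat) \<Rightarrow> bool" where
  "is_pushout A B C D a a' g h \<longleftrightarrow>
     (\<forall>k u v. dhom B k u \<longrightarrow> dhom C k v \<longrightarrow> deq A (u \<circ> a) (v \<circ> a') \<longrightarrow>
        (\<exists>w. dhom D k w \<and> deq B (w \<circ> g) u \<and> deq C (w \<circ> h) v) \<and>
        (\<forall>w w'. dhom D k w \<longrightarrow> deq B (w \<circ> g) u \<longrightarrow> deq C (w \<circ> h) v \<longrightarrow>
                dhom D k w' \<longrightarrow> deq B (w' \<circ> g) u \<longrightarrow> deq C (w' \<circ> h) v \<longrightarrow> deq D w w'))"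

text \<open>An S-cube Q : P(S)^op \<rightarrow> \<Delta>: objects Qo T for T \<subseteq> S, and for T \<subseteq> T' \<subseteq> S
  a morphism Qm T' T : [Qo T'] \<rightarrow> [Qo T], functorially.\<close>

definition is_cube :: "'s set \<Rightarrow> ('s set \<Rightarrow> nat) \<Rightarrow> ('s set \<Rightarrow> 's set \<Rightarrow> nat \<Rightarrow> nat) \<Rightarrow> bool" where
  "is_cube S Qo Qm \<longleftrightarrow>
     (\<forall>T T'. T \<subseteq> T' \<longrightarrow> T' \<subseteq> S \<longrightarrow> dhom (Qo T') (Qo T) (Qm T' T)) \<and>
     (\<forall>T. T \<subseteq> S \<longrightarrow> deq (Qo T) (Qm T T) id) \<and>
     (\<forall>T T' T''. T \<subseteq> T' \<longrightarrow> T' \<subseteq> T'' \<longrightarrow> T'' \<subseteq> S \<longrightarrow>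
        deq (Qo T'') (Qm T'' T) (Qm T' T \<circ> Qm T'' T'))"

definition strongly_biCartesian ::
  "'s set \<Rightarrow> nat \<Rightarrow> ('s \<Rightarrow> nat) \<Rightarrow> ('s \<Rightarrow> nat \<Rightarrow> nat) \<Rightarrow> bool" where
  "strongly_biCartesian S n I f \<longleftrightarrow>
     (\<exists>Qo Qm. is_cube S Qo Qm \<and> Qo {} = n \<and>
        (\<forall>s\<in>S. Qo {s} = I s \<and> deq (I s) (Qm {s} {}) (f s)) \<and>
        (\<forall>T s s'. s \<in> S \<longrightarrow> s' \<in> S \<longrightarrow> s \<noteq> s' \<longrightarrow> T \<subseteq> S - {s, s'} \<longrightarrow>
           is_pullback (Qo (T \<union> {s, s'})) (Qo (T \<union> {s})) (Qo (T \<union> {s'})) (Qo T)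
              (Qm (T \<union> {s, s'}) (T \<union> {s})) (Qm (T \<union> {s, s'}) (T \<union> {s'}))
              (Qm (T \<union> {s}) T) (Qm (T \<union> {s'}) T) \<and>
           is_pushout (Qo (T \<union> {s, s'})) (Qo (T \<union> {s})) (Qo (T \<union> {s'})) (Qo T)
              (Qm (T \<union> {s, s'}) (T \<union> {s})) (Qm (T \<union> {s, s'}) (T \<union> {s'}))
              (Qm (T \<union> {s}) T) (Qm (T \<union> {s'}) T)))"

text \<open>Compatible S-claw: conditions (BC1) and (BC2).\<close>

definition compatible ::
  "'s set \<Rightarrow> nat \<Rightarrow> ('s \<Rightarrow> nat) \<Rightarrow> ('s \<Rightarrow> nat \<Rightarrow> nat) \<Rightarrow> bool" where
  "compatible S n I f \<longleftrightarrow>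
     (\<forall>i\<le>n. \<forall>s\<in>S. \<forall>s'\<in>S.
        (\<nexists>j. {x. x \<le> I s \<and> f s x = i} = {j}) \<longrightarrow>
        (\<nexists>j. {x. x \<le> I s' \<and> f s' x = i} = {j}) \<longrightarrow> s = s') \<and>
     (\<forall>i. 0 < i \<longrightarrow> i \<le> n \<longrightarrow> (\<forall>s\<in>S. \<forall>s'\<in>S.
        \<not> {i - 1, i} \<subseteq> f s ` {0..I s} \<longrightarrow>
        \<not> {i - 1, i} \<subseteq> f s' ` {0..I s'} \<longrightarrow> s = s'))"

end

theory Submission
  imports Defs
begin

(*
  A map into [n] in the simplex category is determined, up to isomorphism over [n], by its fibre
  sizes. So an object over [n] is encoded by a fibre-size function c: it is the object
  [c 0 + ... + c n - 1], cut into consecutive blocks, block i being the fibre over i; between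
  objects with fibre sizes c and d (where d i > 0 whenever c i > 0) block i is collapsed onto
  block i.

  Compatible implies strongly biCartesian: let Q(T) have fibre sizes prod_{s in T} |f_s^-1(i)|.
  By (BC1) at most one factor per fibre differs from 1, so the fibre of each corner of a face is
  a single chain, which makes every face a pullback. A map out of Q(T) is glued fibrewise from
  maps out of Q(T + s) and Q(T + s') that agree on Q(T + s + s'); (BC2) guarantees that wherever
  the glued map switches from one to the other, Q(T + s + s') has a point over the switch where
  the two agree, so the glued map is monotone and the face is a pushout.

  Strongly biCartesian implies compatible: consider the face over [n] spanned by f_s and f_s'.
  Maps into [1] are cuts; if both fibres over i are empty, or one is empty and the other has two
  points, or both legs miss the edge {i-1, i}, the cuts of the two sides glue in no way or in two
  ways, against the pushout property. If both fibres have two points, the pullback fails because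
  the product of two 2-chains is not a chain.
*)

section \<open>Fibre sizes and blocks\<close>

lemma dhom_less: "dhom k (N - 1) u \<Longrightarrow> 0 < N \<Longrightarrow> x \<le> k \<Longrightarrow> u x < N"
  unfolding dhom_def by fastforce

lemma deq_totalI: "0 < N \<Longrightarrow> (\<And>x. x < N \<Longrightarrow> f x = g x) \<Longrightarrow> deq (N - 1) f g"
  unfolding deq_def by simp

lemma deq_totalD: "deq (N - 1) f g \<Longrightarrow> 0 < N \<Longrightarrow> x < N \<Longrightarrow> f x = g x"
  unfolding deq_def by simp

lemma dhom_mono: "dhom m k u \<Longrightarrow> x \<le> y \<Longrightarrow> y \<le> m \<Longrightarrow> u x \<le> u y"
  unfolding dhom_def by blast

lemma dhom_SucI:
  assumes "\<And>x. x \<le> m \<Longrightarrow> w x \<le> k" and "\<And>y. y < m \<Longrightarrow> w y \<le> w (Suc y)"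
  shows "dhom m k w"
  unfolding dhom_def
proof (intro conjI allI impI)
  fix x y assume "x \<le> y" "y \<le> m"
  have "w (min z m) \<le> w (min (Suc z) m)" for z
    using assms(2)[of z] by (cases "z < m") auto
  then have "w (min x m) \<le> w (min y m)"
    using lift_Suc_mono_le[of "\<lambda>y. w (min y m)"] \<open>x \<le> y\<close> by blast
  with \<open>x \<le> y\<close> \<open>y \<le> m\<close> show "w x \<le> w y" by simp
qed (use assms(1) in simp)

definition block_start :: "(nat \<Rightarrow> nat) \<Rightarrow> nat \<Rightarrow> nat" where
  "block_start c i = (\<Sum>j<i. c j)"

definition block_of :: "(nat \<Rightarrow> nat) \<Rightarrow> nat \<Rightarrow> nat" where
  "block_of c x = (LEAST i. x < block_start c (Suc i))"

abbreviation block_total :: "(nat \<Rightarrow> nat) \<Rightarrow> nat \<Rightarrow> nat" where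
  "block_total c n \<equiv> block_start c (Suc n)"

lemma block_start_0 [simp]: "block_start c 0 = 0"
  by (simp add: block_start_def)

lemma block_start_Suc: "block_start c (Suc i) = block_start c i + c i"
  by (simp add: block_start_def)

lemma block_start_mono: "i \<le> j \<Longrightarrow> block_start c i \<le> block_start c j"
  unfolding block_start_def by (rule sum_mono2) auto

lemma block_end_le_start: "i < j \<Longrightarrow> block_start c i + c i \<le> block_start c j"
  by (metis Suc_leI block_start_Suc block_start_mono)

lemma in_block_less_total: "i \<le> n \<Longrightarrow> r < c i \<Longrightarrow> block_start c i + r < block_total c n"
  by (metis add_less_cancel_left le_imp_less_Suc order_less_le_trans block_end_le_start)

lemma block_of_eqI:
  assumes "block_start c i \<le> x" "x < block_start c i + c i"
  shows "block_of c x = i"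
  unfolding block_of_def
proof (rule Least_equality)
  show "x < block_start c (Suc i)" using assms by (simp add: block_start_Suc)
  show "i \<le> j" if "x < block_start c (Suc j)" for j
  proof (rule ccontr)
    assume "\<not> i \<le> j"
    then have "block_start c (Suc j) \<le> block_start c i" by (intro block_start_mono) simp
    with assms that show False by simp
  qed
qed

lemma block_of_in_block [simp]: "r < c i \<Longrightarrow> block_of c (block_start c i + r) = i"
  by (rule block_of_eqI) auto

lemma in_block_eq_iff:
  assumes "r < c i" "t < c j"
  shows "block_start c i + r = block_start c j + t \<longleftrightarrow> i = j \<and> r = t"
  by (metis assms add_left_cancel block_of_in_block)

lemma in_block_le:
  assumes "i \<le> j" "r < c i" "i = j \<Longrightarrow> r \<le> t"
  shows "block_start c i + r \<le> block_start c j + t"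
proof (cases "i = j")
  case False
  with assms have "block_start c i + c i \<le> block_start c j" by (intro block_end_le_start) simp
  with assms show ?thesis by simp
qed (use assms in simp)

lemma successor_in_next_block:
  assumes "i < j" "r < c i" "Suc (block_start c i + r) = block_start c j + t"
  shows "r = c i - 1" "t = 0" "\<And>m. i < m \<Longrightarrow> m < j \<Longrightarrow> c m = 0"
proof -
  have end_i: "block_start c i + c i \<le> block_start c j" using assms(1) by (rule block_end_le_start)
  with assms show "r = c i - 1" "t = 0" by linarith+
  fix m assume "i < m" "m < j"
  then have "block_start c i + c i \<le> block_start c m" "block_start c m + c m \<le> block_start c j"
    by (auto intro: block_end_le_start)
  with assms end_i show "c m = 0" by linarith
qed

lemma in_blockE:
  assumes "x < block_total c n"
  obtains i r where "i \<le> n" "r < c i" "x = block_start c i + r"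
proof -
  let ?i = "block_of c x"
  have below: "x < block_start c (Suc ?i)"
    unfolding block_of_def by (rule LeastI[of _ n]) (rule assms)
  have "?i \<le> n"
    unfolding block_of_def by (rule Least_le) (rule assms)
  moreover have "block_start c ?i \<le> x"
  proof (cases ?i)
    case (Suc j)
    have "\<not> x < block_start c (Suc j)"
      using Suc Least_le[of "\<lambda>i. x < block_start c (Suc i)" j] by (auto simp: block_of_def)
    with Suc show ?thesis by simp
  qed simp
  ultimately show thesis
    using below that[of ?i "x - block_start c ?i"] by (simp add: block_start_Suc)
qed

lemma block_of_mono:
  assumes "x \<le> y" "y < block_total c n"
  shows "block_of c x \<le> block_of c y"
proof -
  obtain i r where x: "r < c i" "x = block_start c i + r"
    using assms by (metis in_blockE le_less_trans)
  obtain j t where y: "t < c j" "y = block_start c j + t"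
    using assms(2) by (rule in_blockE)
  have "\<not> j < i"
    using block_end_le_start[of j i c] x y assms(1) by linarith
  then show ?thesis using x y by simp
qed

lemma total_pos_iff: "0 < block_total c n \<longleftrightarrow> (\<exists>i\<le>n. 0 < c i)"
proof
  assume "0 < block_total c n"
  then obtain i r where "i \<le> n" "r < c i" "0 = block_start c i + r" by (rule in_blockE)
  then show "\<exists>i\<le>n. 0 < c i" by auto
next
  assume "\<exists>i\<le>n. 0 < c i"
  then show "0 < block_total c n" using in_block_less_total[of _ n 0 c] by fastforce
qed

definition block_map :: "(nat \<Rightarrow> nat) \<Rightarrow> (nat \<Rightarrow> nat) \<Rightarrow> nat \<Rightarrow> nat" where
  "block_map c d x =
     block_start d (block_of c x) + min (x - block_start c (block_of c x)) (d (block_of c x) - 1)"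

lemma block_map_in_block:
  "r < c i \<Longrightarrow> block_map c d (block_start c i + r) = block_start d i + min r (d i - 1)"
  by (simp add: block_map_def)

lemma dhom_block_map:
  assumes "\<forall>i\<le>n. 0 < c i \<longrightarrow> 0 < d i" "0 < block_total c n"
  shows "dhom (block_total c n - 1) (block_total d n - 1) (block_map c d)"
  unfolding dhom_def
proof (intro conjI allI impI)
  fix x assume "x \<le> block_total c n - 1"
  then have "x < block_total c n" using assms(2) by linarith
  then obtain i r where "i \<le> n" "r < c i" "x = block_start c i + r" by (rule in_blockE)
  moreover have "block_start d i + min r (d i - 1) < block_total d n"
    using calculation assms(1) by (intro in_block_less_total) auto
  ultimately show "block_map c d x \<le> block_total d n - 1"
    by (simp add: block_map_in_block)
next
  fix x y assume xy: "x \<le> y" "y \<le> block_total c n - 1"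
  then have "x < block_total c n" "y < block_total c n" using assms(2) by linarith+
  obtain i r where x: "i \<le> n" "r < c i" "x = block_start c i + r"
    using \<open>x < _\<close> by (rule in_blockE)
  obtain j t where y: "j \<le> n" "t < c j" "y = block_start c j + t"
    using \<open>y < _\<close> by (rule in_blockE)
  have "i \<le> j" using block_of_mono[OF xy(1) \<open>y < _\<close>] x y by simp
  have "0 < d i" using assms(1) x by auto
  then have "block_start d i + min r (d i - 1) \<le> block_start d j + min t (d j - 1)"
    using \<open>i \<le> j\<close> x y xy(1) by (intro in_block_le) auto
  then show "block_map c d x \<le> block_map c d y" using x y by (simp add: block_map_in_block)
qed

lemma block_map_self: "x < block_total c n \<Longrightarrow> block_map c c x = x"
  by (erule in_blockE) (simp add: block_map_in_block)

lemma block_map_comp: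
  assumes "\<forall>i\<le>n. 0 < c i \<longrightarrow> 0 < d i \<and> e i \<le> d i" "x < block_total c n"
  shows "block_map d e (block_map c d x) = block_map c e x"
  using assms(2)
proof (rule in_blockE)
  fix i r assume "i \<le> n" "r < c i" "x = block_start c i + r"
  moreover have "0 < d i" "e i \<le> d i" using assms(1) calculation by auto
  ultimately show ?thesis by (simp add: block_map_in_block)
qed

section \<open>Faces with factorised fibre sizes\<close>

text \<open>The fibre sizes of a face
  \<open>Q(T \<union> {s, s'}) \<rightarrow> Q(T \<union> {s}), Q(T \<union> {s'}) \<rightarrow> Q(T)\<close> of the cube: \<open>cA, cB, cC, cD\<close>
  for the four corners, \<open>p, q\<close> for the legs \<open>f s, f s'\<close>.\<close>

locale count_square =
  fixes n :: nat and cA cB cC cD p q :: "nat \<Rightarrow> nat"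
  assumes count_B: "i \<le> n \<Longrightarrow> cB i = cD i * p i"
    and count_C: "i \<le> n \<Longrightarrow> cC i = cD i * q i"
    and count_A: "i \<le> n \<Longrightarrow> cA i = cD i * p i * q i"
    and one_nontrivial_factor:
      "i \<le> n \<Longrightarrow> (cD i \<noteq> 1 \<longrightarrow> p i = 1 \<and> q i = 1) \<and> (p i \<noteq> 1 \<longrightarrow> q i = 1)"
    and total_A_pos: "0 < block_total cA n"
begin

lemma fibre_cases:
  assumes "i \<le> n"
  obtains "cA i = cD i" "cB i = cD i" "cC i = cD i"
  | "cD i = 1" "cC i = 1" "cA i = cB i"
  | "cD i = 1" "cB i = 1" "cA i = cC i"
proof (cases "p i = 1 \<and> q i = 1")
  case True
  then show thesis using that(1) count_A[OF assms] count_B[OF assms] count_C[OF assms] by simp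
next
  case False
  then show thesis
    using that(2,3) one_nontrivial_factor[OF assms] count_A[OF assms] count_B[OF assms]
      count_C[OF assms] by auto
qed

lemma cD_pos: "i \<le> n \<Longrightarrow> 0 < cB i \<or> 0 < cC i \<Longrightarrow> 0 < cD i"
  by (metis count_B count_C nat_0_less_mult_iff)

lemma cB_pos: "i \<le> n \<Longrightarrow> 0 < cA i \<Longrightarrow> 0 < cB i"
  by (metis count_A count_B nat_0_less_mult_iff)

lemma totals_pos:
  "0 < block_total cB n" "0 < block_total cC n" "0 < block_total cD n"
proof -
  obtain i where "i \<le> n" "0 < cA i" using total_A_pos total_pos_iff by blast
  then have "0 < cB i \<and> 0 < cC i \<and> 0 < cD i" using count_A count_B count_C by simp
  then show "0 < block_total cB n" "0 < block_total cC n" "0 < block_total cD n"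
    using \<open>i \<le> n\<close> total_pos_iff by blast+
qed

lemma pullback_fibre:
  assumes "i \<le> n" "r < cB i" "t < cC i" "min r (cD i - 1) = min t (cD i - 1)"
  shows "max r t < cA i \<and>
    block_map cA cB (block_start cA i + max r t) = block_start cB i + r \<and>
    block_map cA cC (block_start cA i + max r t) = block_start cC i + t"
  using assms(1)
  by (cases rule: fibre_cases) (use assms in \<open>auto simp: block_map_in_block\<close>)

lemma pullback_fibre_inj:
  assumes "i \<le> n" "r < cA i" "t < cA i"
    "min r (cB i - 1) = min t (cB i - 1)" "min r (cC i - 1) = min t (cC i - 1)"
  shows "r = t"
  using assms(1) by (cases rule: fibre_cases) (use assms in auto)

text \<open>In each fibre at most one of \<open>cD\<close>, \<open>p\<close>, \<open>q\<close> differs from 1, so the fibre of \<open>A\<close> is a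
  copy of the larger of the fibres of \<open>B\<close> and \<open>C\<close>, and a compatible pair of offsets \<open>(r, t)\<close>
  lifts to offset \<open>max r t\<close>.\<close>

definition pullback_pair :: "nat \<Rightarrow> nat \<Rightarrow> nat" where
  "pullback_pair b c = (let i = block_of cB b in
     block_start cA i + max (b - block_start cB i) (c - block_start cC i))"

lemma pullback_pairE:
  assumes "b < block_total cB n" "c < block_total cC n"
    and "block_map cB cD b = block_map cC cD c"
  obtains i where "i \<le> n" "block_of cB b = i"
    "block_start cA i \<le> pullback_pair b c" "pullback_pair b c < block_start cA i + cA i"
    "block_map cA cB (pullback_pair b c) = b" "block_map cA cC (pullback_pair b c) = c"
proof -
  obtain i r where b: "i \<le> n" "r < cB i" "b = block_start cB i + r"
    using assms(1) by (rule in_blockE)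
  obtain j t where c: "j \<le> n" "t < cC j" "c = block_start cC j + t"
    using assms(2) by (rule in_blockE)
  have "0 < cD i" "0 < cD j" using b c cD_pos by auto
  then have "i = j \<and> min r (cD i - 1) = min t (cD j - 1)"
    using assms(3) b c by (subst in_block_eq_iff[symmetric]) (auto simp: block_map_in_block)
  then have "i = j" "min r (cD i - 1) = min t (cD i - 1)" by auto
  note fibre = pullback_fibre[OF b(1,2) c(2)[folded \<open>i = j\<close>] this(2)]
  have "pullback_pair b c = block_start cA i + max r t"
    using b c \<open>i = j\<close> by (simp add: pullback_pair_def Let_def)
  with fibre b c \<open>i = j\<close> show thesis by (intro that[of i]) auto
qed

lemma dhom_pullback_pair:
  assumes u: "dhom k (block_total cB n - 1) u" and v: "dhom k (block_total cC n - 1) v"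
    and uv: "\<And>x. x \<le> k \<Longrightarrow> block_map cB cD (u x) = block_map cC cD (v x)"
  shows "dhom k (block_total cA n - 1) (\<lambda>x. pullback_pair (u x) (v x))"
proof -
  have lift: "\<exists>i. block_of cB (u x) = i \<and> block_start cA i \<le> pullback_pair (u x) (v x) \<and>
      pullback_pair (u x) (v x) < block_start cA i + cA i \<and> i \<le> n" if "x \<le> k" for x
    using dhom_less[OF u totals_pos(1) that] dhom_less[OF v totals_pos(2) that] uv[OF that]
    by (rule pullback_pairE) blast
  have bounded: "pullback_pair (u x) (v x) \<le> block_total cA n - 1" if x: "x \<le> k" for x
  proof -
    obtain i where "i \<le> n" "pullback_pair (u x) (v x) < block_start cA i + cA i"
      using lift[OF x] by blast
    then show ?thesis using block_end_le_start[of i "Suc n" cA] by linarith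
  qed
  have mono: "pullback_pair (u x) (v x) \<le> pullback_pair (u y) (v y)" if xy: "x \<le> y" "y \<le> k" for x y
  proof (cases "block_of cB (u x) = block_of cB (u y)")
    case True
    have "u x \<le> u y" "v x \<le> v y" using u v xy by (auto intro: dhom_mono)
    with True show ?thesis
      by (auto simp: pullback_pair_def Let_def intro: max.coboundedI1 max.coboundedI2 diff_le_mono)
  next
    case False
    have "block_of cB (u x) \<le> block_of cB (u y)"
      using dhom_mono[OF u xy] dhom_less[OF u totals_pos(1) xy(2)] by (rule block_of_mono)
    with False have "block_of cB (u x) < block_of cB (u y)" by simp
    moreover obtain i where "block_of cB (u x) = i" "pullback_pair (u x) (v x) < block_start cA i + cA i"
      using lift xy by (meson order_trans)
    moreover obtain j where "block_of cB (u y) = j" "block_start cA j \<le> pullback_pair (u y) (v y)"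
      using lift xy by blast
    ultimately show ?thesis using block_end_le_start[of i j cA] by linarith
  qed
  show ?thesis unfolding dhom_def using bounded mono by blast
qed

lemma pullback_point_unique:
  assumes "z < block_total cA n" "z' < block_total cA n"
    "block_map cA cB z = block_map cA cB z'" "block_map cA cC z = block_map cA cC z'"
  shows "z = z'"
proof -
  obtain i r where z: "i \<le> n" "r < cA i" "z = block_start cA i + r"
    using assms(1) by (rule in_blockE)
  obtain j t where z': "j \<le> n" "t < cA j" "z' = block_start cA j + t"
    using assms(2) by (rule in_blockE)
  have "0 < cB i" "0 < cB j" using z z' cB_pos by auto
  then have "i = j \<and> min r (cB i - 1) = min t (cB j - 1)"
    using assms(3) z z' by (subst in_block_eq_iff[symmetric]) (auto simp: block_map_in_block)
  then have "i = j" "min r (cB i - 1) = min t (cB i - 1)" by auto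
  moreover have "min r (cC i - 1) = min t (cC i - 1)"
    using assms(4) z z' \<open>i = j\<close> by (simp add: block_map_in_block)
  ultimately show ?thesis using pullback_fibre_inj[OF z(1,2)] z z' by auto
qed

theorem is_pullback:
  "is_pullback (block_total cA n - 1) (block_total cB n - 1) (block_total cC n - 1)
     (block_total cD n - 1) (block_map cA cB) (block_map cA cC) (block_map cB cD) (block_map cC cD)"
  unfolding is_pullback_def
proof (intro allI impI conjI)
  fix k u v
  assume u: "dhom k (block_total cB n - 1) u" and v: "dhom k (block_total cC n - 1) v"
    and "deq k (block_map cB cD \<circ> u) (block_map cC cD \<circ> v)"
  then have uv: "\<And>x. x \<le> k \<Longrightarrow> block_map cB cD (u x) = block_map cC cD (v x)"
    by (simp add: deq_def)
  have "block_map cA cB (pullback_pair (u x) (v x)) = u x \<and>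
    block_map cA cC (pullback_pair (u x) (v x)) = v x" if "x \<le> k" for x
    using dhom_less[OF u totals_pos(1) that] dhom_less[OF v totals_pos(2) that] uv[OF that]
    by (rule pullback_pairE) simp
  then show "\<exists>w. dhom k (block_total cA n - 1) w \<and> deq k (block_map cA cB \<circ> w) u
      \<and> deq k (block_map cA cC \<circ> w) v"
    using dhom_pullback_pair[OF u v uv] by (intro exI[of _ "\<lambda>x. pullback_pair (u x) (v x)"]) (simp add: deq_def)
next
  fix k u v w w'
  assume w: "dhom k (block_total cA n - 1) w" "deq k (block_map cA cB \<circ> w) u"
    "deq k (block_map cA cC \<circ> w) v"
    and w': "dhom k (block_total cA n - 1) w'" "deq k (block_map cA cB \<circ> w') u"
    "deq k (block_map cA cC \<circ> w') v"
  show "deq k w w'"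
    unfolding deq_def
  proof (intro allI impI)
    fix x assume "x \<le> k"
    then have "w x < block_total cA n" "w' x < block_total cA n"
      using w(1) w'(1) total_A_pos by (auto intro: dhom_less)
    moreover have "block_map cA cB (w x) = block_map cA cB (w' x)"
      "block_map cA cC (w x) = block_map cA cC (w' x)"
      using \<open>x \<le> k\<close> w(2,3) w'(2,3) unfolding deq_def by (metis comp_apply)+
    ultimately show "w x = w' x" by (rule pullback_point_unique)
  qed
qed

end

definition misses_edge :: "(nat \<Rightarrow> nat) \<Rightarrow> nat \<Rightarrow> bool" where
  "misses_edge c i \<longleftrightarrow> c (i - 1) = 0 \<or> c i = 0"

locale count_square_edges = count_square +
  assumes one_factor_misses_edge: "0 < i \<Longrightarrow> i \<le> n \<Longrightarrow>
    \<not> (misses_edge cD i \<and> misses_edge p i) \<and> \<not> (misses_edge cD i \<and> misses_edge q i) \<and>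
    \<not> (misses_edge p i \<and> misses_edge q i)"
begin

lemma cD_le_cB:
  assumes "i \<le> n" "0 < cB i"
  shows "cD i \<le> cB i"
  using assms(1) by (cases rule: fibre_cases) (use assms in auto)

lemma cC_eq_cD_if_cB_0:
  assumes "i \<le> n" "cB i = 0"
  shows "cC i = cD i"
  using assms(1) by (cases rule: fibre_cases) (use assms in auto)

lemma cB_cC_le_cA:
  assumes "i \<le> n" "0 < cB i" "0 < cC i"
  shows "cB i \<le> cA i \<and> cC i \<le> cA i"
  using assms(1) by (cases rule: fibre_cases) (use assms in auto)

lemma no_C_hole_before_B_hole:
  assumes "i < j" "j \<le> n" "0 < cD i" "cC i = 0" "0 < cD j" "cB j = 0"
    and "\<And>m. i < m \<Longrightarrow> m < j \<Longrightarrow> cD m = 0"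
  shows False
proof -
  have "q i = 0" "p j = 0" using assms count_B count_C by auto
  show False
  proof (cases "j = Suc i")
    case True
    then show False using one_factor_misses_edge[of j] assms \<open>q i = 0\<close> \<open>p j = 0\<close>
      by (simp add: misses_edge_def)
  next
    case False
    then have "cD (Suc i) = 0" using assms by simp
    then show False using one_factor_misses_edge[of "Suc i"] assms \<open>q i = 0\<close>
      by (simp add: misses_edge_def)
  qed
qed

lemma no_B_hole_before_C_hole:
  assumes "i < j" "j \<le> n" "0 < cD i" "cB i = 0" "0 < cD j" "cC j = 0"
    and "\<And>m. i < m \<Longrightarrow> m < j \<Longrightarrow> cD m = 0"
  shows False
proof -
  have "p i = 0" "q j = 0" using assms count_B count_C by auto
  show False
  proof (cases "j = Suc i")
    case True
    then show False using one_factor_misses_edge[of j] assms \<open>p i = 0\<close> \<open>q j = 0\<close>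
      by (simp add: misses_edge_def)
  next
    case False
    then have "cD (j - 1) = 0" using assms by simp
    then show False using one_factor_misses_edge[of j] assms \<open>q j = 0\<close>
      by (simp add: misses_edge_def)
  qed
qed

lemma in_image_B_or_C:
  assumes "y < block_total cD n"
  shows "(\<exists>b < block_total cB n. block_map cB cD b = y) \<or> (\<exists>c < block_total cC n. block_map cC cD c = y)"
  using assms
proof (rule in_blockE)
  fix i r assume y: "i \<le> n" "r < cD i" "y = block_start cD i + r"
  show ?thesis
  proof (cases "0 < cB i")
    case True
    then have "r < cB i" using cD_le_cB[OF y(1)] y by simp
    then show ?thesis using y in_block_less_total[OF y(1)]
      by (intro disjI1 exI[of _ "block_start cB i + r"]) (simp add: block_map_in_block)
  next
    case False
    then have "r < cC i" using cC_eq_cD_if_cB_0[OF y(1)] y by simp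
    then show ?thesis using y in_block_less_total[OF y(1)]
      by (intro disjI2 exI[of _ "block_start cC i + r"]) (simp add: block_map_in_block)
  qed
qed

definition pushout_map :: "(nat \<Rightarrow> nat) \<Rightarrow> (nat \<Rightarrow> nat) \<Rightarrow> nat \<Rightarrow> nat" where
  "pushout_map u v y = (let i = block_of cD y; r = y - block_start cD i in
     if 0 < cB i then u (block_start cB i + r) else v (block_start cC i + r))"

lemma pushout_map_in_block:
  "r < cD i \<Longrightarrow> pushout_map u v (block_start cD i + r) =
     (if 0 < cB i then u (block_start cB i + r) else v (block_start cC i + r))"
  by (simp add: pushout_map_def)

context
  fixes k :: nat and u v :: "nat \<Rightarrow> nat"
  assumes u: "dhom (block_total cB n - 1) k u" and v: "dhom (block_total cC n - 1) k v"
    and comm: "\<And>z. z < block_total cA n \<Longrightarrow> u (block_map cA cB z) = v (block_map cA cC z)"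
begin

lemma u_mono: "a \<le> b \<Longrightarrow> b < block_total cB n \<Longrightarrow> u a \<le> u b"
  using u by (rule dhom_mono) auto

lemma v_mono: "a \<le> b \<Longrightarrow> b < block_total cC n \<Longrightarrow> v a \<le> v b"
  using v by (rule dhom_mono) auto

lemma comm_in_block:
  assumes "i \<le> n" "r < cA i"
  shows "u (block_start cB i + min r (cB i - 1)) = v (block_start cC i + min r (cC i - 1))"
  using comm[OF in_block_less_total[of i n r cA]] assms by (simp add: block_map_in_block)

lemma comm_block_start:
  assumes "i \<le> n" "0 < cB i" "0 < cC i"
  shows "u (block_start cB i) = v (block_start cC i)"
  using comm_in_block[of i 0] cB_cC_le_cA[OF assms] assms by simp

lemma comm_block_end:
  assumes "i \<le> n" "0 < cB i" "0 < cC i"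
  shows "u (block_start cB i + (cB i - 1)) = v (block_start cC i + (cC i - 1))"
proof -
  have "cB i \<le> cA i" "cC i \<le> cA i" using cB_cC_le_cA[OF assms] by auto
  then show ?thesis using comm_in_block[of i "cA i - 1"] assms by (simp add: min_absorb2)
qed

lemma pushout_map_B: "b < block_total cB n \<Longrightarrow> pushout_map u v (block_map cB cD b) = u b"
proof (erule in_blockE)
  fix i r assume b: "i \<le> n" "r < cB i" "b = block_start cB i + r"
  then have "0 < cD i" using cD_pos by auto
  then have "pushout_map u v (block_map cB cD b) = u (block_start cB i + min r (cD i - 1))"
    using b by (simp add: block_map_in_block pushout_map_in_block)
  also have "\<dots> = u b"
    using b(1)
  proof (cases rule: fibre_cases)
    case 2
    then show ?thesis using comm_in_block[OF b(1), of 0] comm_in_block[OF b(1), of r] b by simp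
  qed (use b in auto)
  finally show ?thesis .
qed

lemma pushout_map_C: "c < block_total cC n \<Longrightarrow> pushout_map u v (block_map cC cD c) = v c"
proof (erule in_blockE)
  fix i r assume c: "i \<le> n" "r < cC i" "c = block_start cC i + r"
  then have "0 < cD i" using cD_pos by auto
  then have val: "pushout_map u v (block_map cC cD c) =
      (if 0 < cB i then u (block_start cB i + min r (cD i - 1)) else v (block_start cC i + min r (cD i - 1)))"
    using c by (simp add: block_map_in_block pushout_map_in_block)
  show ?thesis
  proof (cases "0 < cB i")
    case True
    have "u (block_start cB i + min r (cD i - 1)) = v c"
      using c(1)
    proof (cases rule: fibre_cases)
      case 1
      then show ?thesis using comm_in_block[OF c(1), of r] c by simp
    next
      case 2
      then show ?thesis using comm_block_start[OF c(1) True] c by simp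
    next
      case 3
      then show ?thesis using comm_in_block[OF c(1), of r] c by simp
    qed
    with True val show ?thesis by simp
  qed (use val c cC_eq_cD_if_cB_0 in simp)
qed

lemma pushout_map_le:
  assumes "y < block_total cD n"
  shows "pushout_map u v y \<le> k"
  using in_image_B_or_C[OF assms]
proof (elim disjE exE conjE)
  fix b assume "b < block_total cB n" "block_map cB cD b = y"
  then show ?thesis using pushout_map_B[of b] u by (auto simp: dhom_def)
next
  fix c assume "c < block_total cC n" "block_map cC cD c = y"
  then show ?thesis using pushout_map_C[of c] v by (auto simp: dhom_def)
qed

lemma pushout_map_step_in_block:
  assumes "i \<le> n" "Suc r < cD i"
  shows "pushout_map u v (block_start cD i + r) \<le> pushout_map u v (block_start cD i + Suc r)"
proof -
  have "pushout_map u v (block_start cD i + r) =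
      (if 0 < cB i then u (block_start cB i + r) else v (block_start cC i + r))"
    using assms(2) by (intro pushout_map_in_block) simp
  moreover have "pushout_map u v (block_start cD i + Suc r) =
      (if 0 < cB i then u (block_start cB i + Suc r) else v (block_start cC i + Suc r))"
    using assms(2) by (rule pushout_map_in_block)
  moreover have "u (block_start cB i + r) \<le> u (block_start cB i + Suc r)" if "0 < cB i"
    using cD_le_cB[OF assms(1) that] assms in_block_less_total[of i n "Suc r" cB] by (intro u_mono) auto
  moreover have "v (block_start cC i + r) \<le> v (block_start cC i + Suc r)" if "cB i = 0"
    using cC_eq_cD_if_cB_0[OF assms(1) that] assms in_block_less_total[of i n "Suc r" cC] by (intro v_mono) auto
  ultimately show ?thesis by auto
qed

text \<open>Where \<open>pushout_map\<close> switches from reading \<open>u\<close> to reading \<open>v\<close> between consecutive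
  nonempty fibres \<open>i < j\<close> of \<open>D\<close>, monotonicity is bridged through the last point of the
  \<open>A\<close>-fibre over \<open>i\<close>, where \<open>u\<close> and \<open>v\<close> agree; (BC2) is what makes that fibre nonempty.\<close>

lemma switch_from_B_to_C:
  assumes "i < j" "j \<le> n" "0 < cD i" "0 < cD j" "0 < cB i" "cB j = 0"
    and gap: "\<And>m. i < m \<Longrightarrow> m < j \<Longrightarrow> cD m = 0"
  shows "u (block_start cB i + (cD i - 1)) \<le> v (block_start cC j)"
proof -
  have "i \<le> n" using assms by simp
  have "0 < cC i" using no_C_hole_before_B_hole[OF assms(1-3) _ assms(4,6) gap] by auto
  have "u (block_start cB i + (cD i - 1)) \<le> u (block_start cB i + (cB i - 1))"
    using cD_le_cB[OF \<open>i \<le> n\<close> assms(5)] in_block_less_total[of i n "cB i - 1" cB]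
      \<open>i \<le> n\<close> assms(5)
    by (intro u_mono) auto
  also have "\<dots> = v (block_start cC i + (cC i - 1))"
    using comm_block_end[OF \<open>i \<le> n\<close> assms(5) \<open>0 < cC i\<close>] .
  also have "\<dots> \<le> v (block_start cC j)"
    using block_end_le_start[OF assms(1), of cC] in_block_less_total[of j n 0 cC]
      cC_eq_cD_if_cB_0[OF assms(2,6)] assms(2,4) \<open>0 < cC i\<close>
    by (intro v_mono) auto
  finally show ?thesis .
qed

lemma switch_from_C_to_B:
  assumes "i < j" "j \<le> n" "0 < cD i" "0 < cD j" "cB i = 0" "0 < cB j"
    and gap: "\<And>m. i < m \<Longrightarrow> m < j \<Longrightarrow> cD m = 0"
  shows "v (block_start cC i + (cD i - 1)) \<le> u (block_start cB j)"
proof -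
  have "i \<le> n" using assms by simp
  have "0 < cC j" using no_B_hole_before_C_hole[OF assms(1-3,5,4) _ gap] by auto
  have "v (block_start cC i + (cD i - 1)) \<le> v (block_start cC j)"
    using block_end_le_start[OF assms(1), of cC] in_block_less_total[of j n 0 cC]
      cC_eq_cD_if_cB_0[OF \<open>i \<le> n\<close> assms(5)] assms(2,3) \<open>0 < cC j\<close>
    by (intro v_mono) auto
  also have "\<dots> = u (block_start cB j)"
    using comm_block_start[OF assms(2,6) \<open>0 < cC j\<close>] by simp
  finally show ?thesis .
qed

lemma pushout_map_step_across_blocks:
  assumes "i < j" "j \<le> n" "0 < cD i" "0 < cD j"
    and gap: "\<And>m. i < m \<Longrightarrow> m < j \<Longrightarrow> cD m = 0"
  shows "pushout_map u v (block_start cD i + (cD i - 1)) \<le> pushout_map u v (block_start cD j)"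
proof -
  have "i \<le> n" using assms by simp
  have left: "pushout_map u v (block_start cD i + (cD i - 1)) =
      (if 0 < cB i then u (block_start cB i + (cD i - 1)) else v (block_start cC i + (cD i - 1)))"
    using assms(3) by (intro pushout_map_in_block) simp
  have right: "pushout_map u v (block_start cD j) =
      (if 0 < cB j then u (block_start cB j) else v (block_start cC j))"
    using pushout_map_in_block[of 0 j] assms(4) by simp
  consider (BB) "0 < cB i" "0 < cB j" | (BC) "0 < cB i" "cB j = 0"
    | (CB) "cB i = 0" "0 < cB j" | (CC) "cB i = 0" "cB j = 0" by auto
  then show ?thesis
  proof cases
    case BB
    then show ?thesis
      using left right block_end_le_start[OF assms(1), of cB] in_block_less_total[of j n 0 cB]
        cD_le_cB[OF \<open>i \<le> n\<close>] assms(2)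
      by (simp add: u_mono)
  next
    case CC
    then show ?thesis
      using left right block_end_le_start[OF assms(1), of cC] in_block_less_total[of j n 0 cC]
        cC_eq_cD_if_cB_0[OF \<open>i \<le> n\<close>] cC_eq_cD_if_cB_0[OF assms(2)] assms(2-4)
      by (simp add: v_mono)
  qed (use left right switch_from_B_to_C[OF assms(1-4) _ _ gap]
      switch_from_C_to_B[OF assms(1-4) _ _ gap] in simp_all)
qed

lemma pushout_map_step:
  assumes "Suc y < block_total cD n"
  shows "pushout_map u v y \<le> pushout_map u v (Suc y)"
proof -
  obtain i r where y: "i \<le> n" "r < cD i" "y = block_start cD i + r"
    using assms by (metis Suc_lessD in_blockE)
  obtain j t where y': "j \<le> n" "t < cD j" "Suc y = block_start cD j + t"
    using assms by (rule in_blockE)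
  have "i \<le> j" using block_of_mono[OF _ assms, of y] y y' by simp
  show ?thesis
  proof (cases "i = j")
    case True
    then have "t = Suc r" using y y' by simp
    then show ?thesis using pushout_map_step_in_block[OF y(1)] y y' True by simp
  next
    case False
    with \<open>i \<le> j\<close> have "i < j" by simp
    note next_block = successor_in_next_block[OF this y(2) y'(3)[unfolded y(3)]]
    then show ?thesis
      using pushout_map_step_across_blocks[OF \<open>i < j\<close> y'(1)] y y' by simp
  qed
qed

lemma dhom_pushout_map: "dhom (block_total cD n - 1) k (pushout_map u v)"
  using totals_pos(3) by (intro dhom_SucI pushout_map_le pushout_map_step) auto

lemma pushout_map_factors:
  "deq (block_total cB n - 1) (pushout_map u v \<circ> block_map cB cD) u"
  "deq (block_total cC n - 1) (pushout_map u v \<circ> block_map cC cD) v"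
  by (rule deq_totalI; simp add: totals_pos pushout_map_B pushout_map_C)+

end

lemma deq_D_if_deq_B_C:
  assumes "deq (block_total cB n - 1) (w \<circ> block_map cB cD) (w' \<circ> block_map cB cD)"
    and "deq (block_total cC n - 1) (w \<circ> block_map cC cD) (w' \<circ> block_map cC cD)"
  shows "deq (block_total cD n - 1) w w'"
proof (rule deq_totalI[OF totals_pos(3)])
  fix y assume "y < block_total cD n"
  from in_image_B_or_C[OF this] show "w y = w' y"
  proof (elim disjE exE conjE)
    fix b assume "b < block_total cB n" "block_map cB cD b = y"
    then show "w y = w' y" using deq_totalD[OF assms(1) totals_pos(1)] by force
  next
    fix c assume "c < block_total cC n" "block_map cC cD c = y"
    then show "w y = w' y" using deq_totalD[OF assms(2) totals_pos(2)] by force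
  qed
qed

theorem is_pushout:
  "is_pushout (block_total cA n - 1) (block_total cB n - 1) (block_total cC n - 1)
     (block_total cD n - 1) (block_map cA cB) (block_map cA cC) (block_map cB cD) (block_map cC cD)"
  unfolding is_pushout_def
proof (intro allI impI conjI)
  fix k u v
  assume u: "dhom (block_total cB n - 1) k u" and v: "dhom (block_total cC n - 1) k v"
    and "deq (block_total cA n - 1) (u \<circ> block_map cA cB) (v \<circ> block_map cA cC)"
  then have comm: "\<And>z. z < block_total cA n \<Longrightarrow> u (block_map cA cB z) = v (block_map cA cC z)"
    using deq_totalD total_A_pos by force
  show "\<exists>w. dhom (block_total cD n - 1) k w \<and> deq (block_total cB n - 1) (w \<circ> block_map cB cD) u
      \<and> deq (block_total cC n - 1) (w \<circ> block_map cC cD) v"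
    using dhom_pushout_map[OF u v comm] pushout_map_factors[OF u v comm] by blast
next
  fix k u v w w'
  assume "deq (block_total cB n - 1) (w \<circ> block_map cB cD) u"
    "deq (block_total cC n - 1) (w \<circ> block_map cC cD) v"
    "deq (block_total cB n - 1) (w' \<circ> block_map cB cD) u"
    "deq (block_total cC n - 1) (w' \<circ> block_map cC cD) v"
  then show "deq (block_total cD n - 1) w w'"
    by (intro deq_D_if_deq_B_C) (auto simp: deq_def)
qed

end

section \<open>The cube of a compatible claw\<close>

definition fibre_count :: "nat \<Rightarrow> (nat \<Rightarrow> nat) \<Rightarrow> nat \<Rightarrow> nat" where
  "fibre_count m \<phi> j = card {x. x \<le> m \<and> \<phi> x = j}"

lemma block_start_fibre_count: "block_start (fibre_count m \<phi>) i = card {x. x \<le> m \<and> \<phi> x < i}"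
proof (induction i)
  case (Suc i)
  have "{x. x \<le> m \<and> \<phi> x < Suc i} = {x. x \<le> m \<and> \<phi> x < i} \<union> {x. x \<le> m \<and> \<phi> x = i}" by auto
  moreover have "card ({x. x \<le> m \<and> \<phi> x < i} \<union> {x. x \<le> m \<and> \<phi> x = i}) =
      card {x. x \<le> m \<and> \<phi> x < i} + card {x. x \<le> m \<and> \<phi> x = i}"
    by (rule card_Un_disjoint) auto
  ultimately show ?case using Suc by (simp add: block_start_Suc fibre_count_def)
qed simp

lemma below_block_start_fibre_count_iff:
  assumes "dhom m n \<phi>" "x \<le> m"
  shows "x < block_start (fibre_count m \<phi>) i \<longleftrightarrow> \<phi> x < i"
proof
  assume "\<phi> x < i"
  then have "{0..x} \<subseteq> {y. y \<le> m \<and> \<phi> y < i}"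
    using assms by (auto intro: le_less_trans[OF dhom_mono[OF assms(1)]])
  then have "card {0..x} \<le> card {y. y \<le> m \<and> \<phi> y < i}" by (rule card_mono[rotated]) auto
  then show "x < block_start (fibre_count m \<phi>) i" by (simp add: block_start_fibre_count)
next
  assume "x < block_start (fibre_count m \<phi>) i"
  show "\<phi> x < i"
  proof (rule ccontr)
    assume "\<not> \<phi> x < i"
    then have "{y. y \<le> m \<and> \<phi> y < i} \<subseteq> {0..<x}"
      using dhom_mono[OF assms(1), of x] by (auto intro: leI) (meson leI order_le_less_trans)
    then have "card {y. y \<le> m \<and> \<phi> y < i} \<le> card {0..<x}" by (rule card_mono[rotated]) auto
    with \<open>x < block_start _ i\<close> show False by (simp add: block_start_fibre_count)
  qed
qed

lemma block_total_fibre_count: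
  assumes "dhom m n \<phi>"
  shows "block_total (fibre_count m \<phi>) n = Suc m"
proof -
  have "{x. x \<le> m \<and> \<phi> x < Suc n} = {..m}" using assms by (auto simp: dhom_def)
  then show ?thesis by (simp add: block_start_fibre_count)
qed

lemma block_of_fibre_count:
  assumes "dhom m n \<phi>" "x \<le> m"
  shows "block_of (fibre_count m \<phi>) x = \<phi> x"
  using below_block_start_fibre_count_iff[OF assms, of "\<phi> x"]
    below_block_start_fibre_count_iff[OF assms, of "Suc (\<phi> x)"]
  by (intro block_of_eqI) (auto simp: block_start_Suc)

lemma fibre_count_pos_iff: "0 < fibre_count m \<phi> j \<longleftrightarrow> j \<in> \<phi> ` {0..m}"
  unfolding fibre_count_def by (auto simp: card_gt_0_iff)

lemma fibre_count_eq_1_iff: "fibre_count m \<phi> j = 1 \<longleftrightarrow> (\<exists>k. {x. x \<le> m \<and> \<phi> x = j} = {k})"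
  unfolding fibre_count_def by (simp add: card_1_singleton_iff)

lemma misses_edge_fibre_count_iff:
  "misses_edge (fibre_count m \<phi>) i \<longleftrightarrow> \<not> {i - 1, i} \<subseteq> \<phi> ` {0..m}"
proof -
  have "fibre_count m \<phi> j = 0 \<longleftrightarrow> j \<notin> \<phi> ` {0..m}" for j
    using fibre_count_pos_iff[of m \<phi> j] by linarith
  then show ?thesis unfolding misses_edge_def insert_subset by simp
qed

locale compatible_claw =
  fixes S :: "'s set" and n :: nat and I :: "'s \<Rightarrow> nat" and f :: "'s \<Rightarrow> nat \<Rightarrow> nat"
  assumes finite_S: "finite S" and dhom_f: "s \<in> S \<Longrightarrow> dhom (I s) n (f s)"
    and compatible: "compatible S n I f"
begin

definition count :: "'s \<Rightarrow> nat \<Rightarrow> nat" where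
  "count s = fibre_count (I s) (f s)"

definition cube_count :: "'s set \<Rightarrow> nat \<Rightarrow> nat" where
  "cube_count T i = (\<Prod>s\<in>T. count s i)"

lemma count_ne_1_unique:
  "i \<le> n \<Longrightarrow> s \<in> S \<Longrightarrow> s' \<in> S \<Longrightarrow> count s i \<noteq> 1 \<Longrightarrow> count s' i \<noteq> 1 \<Longrightarrow> s = s'"
  using compatible unfolding compatible_def count_def fibre_count_eq_1_iff by blast

lemma count_misses_edge_unique:
  "0 < i \<Longrightarrow> i \<le> n \<Longrightarrow> s \<in> S \<Longrightarrow> s' \<in> S \<Longrightarrow>
    misses_edge (count s) i \<Longrightarrow> misses_edge (count s') i \<Longrightarrow> s = s'"
  using compatible unfolding compatible_def count_def misses_edge_fibre_count_iff by blast

text \<open>If every fibre index were missed by some \<open>f s\<close>, then by (BC2) consecutive indices would be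
  missed by the same \<open>s\<close>, so \<open>f s\<close> would miss all of \<open>[n]\<close>.\<close>

lemma common_point: "\<exists>i\<le>n. \<forall>s\<in>S. 0 < count s i"
proof (rule ccontr)
  assume "\<not> ?thesis"
  then have missed: "\<forall>i\<le>n. \<exists>s\<in>S. count s i = 0" by auto
  then obtain s0 where s0: "s0 \<in> S" "count s0 0 = 0" by auto
  have "count s0 i = 0" if "i \<le> n" for i
    using that
  proof (induction i)
    case (Suc i)
    then obtain s where "s \<in> S" "count s (Suc i) = 0" using missed by blast
    moreover have "s0 = s"
      using count_misses_edge_unique[of "Suc i" s0 s] Suc s0 calculation by (simp add: misses_edge_def)
    ultimately show ?case by simp
  qed (use s0 in simp)
  moreover have "f s0 0 \<le> n" using dhom_f[OF s0(1)] unfolding dhom_def by auto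
  moreover have "0 < count s0 (f s0 0)" unfolding count_def fibre_count_pos_iff by auto
  ultimately show False by fastforce
qed

lemma cube_count_eq_0_iff: "T \<subseteq> S \<Longrightarrow> cube_count T i = 0 \<longleftrightarrow> (\<exists>t\<in>T. count t i = 0)"
  unfolding cube_count_def using finite_S by (simp add: finite_subset)

lemma cube_count_mono:
  assumes "T \<subseteq> T'" "T' \<subseteq> S" "0 < cube_count T' i"
  shows "0 < cube_count T i \<and> cube_count T i \<le> cube_count T' i"
proof -
  have "finite T'" using finite_S assms(2) by (rule finite_subset[rotated])
  then have "cube_count T' i = (\<Prod>s\<in>T' - T. count s i) * cube_count T i"
    unfolding cube_count_def using prod.subset_diff[OF assms(1)] by simp
  with assms(3) show ?thesis by (metis dvd_imp_le dvd_triv_right nat_0_less_mult_iff)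
qed

lemma block_total_cube_count_pos: "T \<subseteq> S \<Longrightarrow> 0 < block_total (cube_count T) n"
  using common_point cube_count_eq_0_iff total_pos_iff by (metis gr0I subsetD)

lemma cube_count_insert:
  "T \<subseteq> S \<Longrightarrow> s \<notin> T \<Longrightarrow> cube_count (insert s T) i = cube_count T i * count s i"
  unfolding cube_count_def using finite_S by (simp add: finite_subset mult.commute)

lemma face_count_square:
  assumes "s \<in> S" "s' \<in> S" "s \<noteq> s'" "T \<subseteq> S - {s, s'}"
  shows "count_square n (cube_count (T \<union> {s, s'})) (cube_count (T \<union> {s})) (cube_count (T \<union> {s'}))
    (cube_count T) (count s) (count s')"
proof
  have TS: "T \<subseteq> S" "s \<notin> T" "s' \<notin> T" "insert s' T \<subseteq> S" using assms by auto
  fix i assume i: "i \<le> n"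
  show "cube_count (T \<union> {s}) i = cube_count T i * count s i"
    "cube_count (T \<union> {s'}) i = cube_count T i * count s' i"
    "cube_count (T \<union> {s, s'}) i = cube_count T i * count s i * count s' i"
    using TS assms(3) by (simp_all add: cube_count_insert mult_ac)
  have "count s i = 1 \<and> count s' i = 1" if "cube_count T i \<noteq> 1"
  proof -
    obtain t where "t \<in> T" "count t i \<noteq> 1" using \<open>cube_count T i \<noteq> 1\<close>
      unfolding cube_count_def by (metis prod.neutral)
    then show ?thesis using count_ne_1_unique[OF i] TS assms by blast
  qed
  moreover have "count s' i = 1" if "count s i \<noteq> 1"
    using count_ne_1_unique[OF i] assms that by blast
  ultimately show "(cube_count T i \<noteq> 1 \<longrightarrow> count s i = 1 \<and> count s' i = 1) \<and>
      (count s i \<noteq> 1 \<longrightarrow> count s' i = 1)" by blast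
next
  show "0 < block_total (cube_count (T \<union> {s, s'})) n"
    using assms by (intro block_total_cube_count_pos) auto
qed

lemma face_count_square_edges:
  assumes "s \<in> S" "s' \<in> S" "s \<noteq> s'" "T \<subseteq> S - {s, s'}"
  shows "count_square_edges n (cube_count (T \<union> {s, s'})) (cube_count (T \<union> {s}))
    (cube_count (T \<union> {s'})) (cube_count T) (count s) (count s')"
proof (intro_locales)
  show "count_square n (cube_count (T \<union> {s, s'})) (cube_count (T \<union> {s})) (cube_count (T \<union> {s'}))
    (cube_count T) (count s) (count s')" using assms by (rule face_count_square)
  have T_misses: "\<exists>t\<in>T. misses_edge (count t) i" if "misses_edge (cube_count T) i" for i
    using that cube_count_eq_0_iff[of T] assms(4) unfolding misses_edge_def by blast
  show "count_square_edges_axioms n (cube_count T) (count s) (count s')"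
  proof
    fix i assume i: "0 < i" "i \<le> n"
    show "\<not> (misses_edge (cube_count T) i \<and> misses_edge (count s) i) \<and>
        \<not> (misses_edge (cube_count T) i \<and> misses_edge (count s') i) \<and>
        \<not> (misses_edge (count s) i \<and> misses_edge (count s') i)"
      using T_misses count_misses_edge_unique[OF i] assms by blast
  qed
qed

lemma is_cube_cube_count:
  "is_cube S (\<lambda>T. block_total (cube_count T) n - 1) (\<lambda>T' T. block_map (cube_count T') (cube_count T))"
  unfolding is_cube_def
proof (intro conjI allI impI)
  fix T T' assume "T \<subseteq> T'" "T' \<subseteq> S"
  then show "dhom (block_total (cube_count T') n - 1) (block_total (cube_count T) n - 1)
      (block_map (cube_count T') (cube_count T))"
    using cube_count_mono block_total_cube_count_pos by (intro dhom_block_map) auto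
next
  fix T assume "T \<subseteq> S"
  then show "deq (block_total (cube_count T) n - 1) (block_map (cube_count T) (cube_count T)) id"
    using block_total_cube_count_pos[of T] by (auto simp: deq_def intro!: block_map_self[where n = n])
next
  fix T T' T'' assume T: "T \<subseteq> T'" "T' \<subseteq> T''" "T'' \<subseteq> S"
  then have "\<forall>i\<le>n. 0 < cube_count T'' i \<longrightarrow> 0 < cube_count T' i \<and> cube_count T i \<le> cube_count T' i"
    using cube_count_mono by (meson order_trans)
  then show "deq (block_total (cube_count T'') n - 1) (block_map (cube_count T'') (cube_count T))
      (block_map (cube_count T') (cube_count T) \<circ> block_map (cube_count T'') (cube_count T'))"
    using block_total_cube_count_pos[OF T(3)] block_map_comp by (fastforce simp: deq_def)
qed

theorem strongly_biCartesian: "strongly_biCartesian S n I f"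
  unfolding strongly_biCartesian_def
proof (intro exI conjI ballI allI impI)
  show "is_cube S (\<lambda>T. block_total (cube_count T) n - 1) (\<lambda>T' T. block_map (cube_count T') (cube_count T))"
    by (rule is_cube_cube_count)
  have empty: "cube_count {} = (\<lambda>_. 1)" by (simp add: cube_count_def fun_eq_iff)
  then show "block_total (cube_count {}) n - 1 = n" by (simp add: block_start_def)
  fix s assume "s \<in> S"
  have single: "cube_count {s} = fibre_count (I s) (f s)" by (simp add: cube_count_def count_def fun_eq_iff)
  show "block_total (cube_count {s}) n - 1 = I s"
    using block_total_fibre_count[OF dhom_f[OF \<open>s \<in> S\<close>]] single by simp
  show "deq (I s) (block_map (cube_count {s}) (cube_count {})) (f s)"
    using block_of_fibre_count[OF dhom_f[OF \<open>s \<in> S\<close>]] single empty by (simp add: deq_def block_map_def block_start_def)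
qed (metis face_count_square_edges count_square_edges.is_pushout count_square.is_pullback
    count_square_edges.axioms(1))+

end

section \<open>BiCartesian squares in the simplex category\<close>

lemma not_singletonE:
  fixes F :: "'a :: linorder set"
  assumes "\<nexists>j. F = {j}"
  obtains "F = {}" | x y where "x < y" "x \<in> F" "y \<in> F"
proof (cases "F = {}")
  case False
  then obtain x where "x \<in> F" by blast
  moreover obtain y where "y \<in> F" "y \<noteq> x" using assms calculation by blast
  ultimately show thesis using that(2) by (cases x y rule: linorder_cases) auto
qed

lemma dhom_upset_indicator:
  assumes "\<And>x y. x \<le> y \<Longrightarrow> y \<le> m \<Longrightarrow> P x \<Longrightarrow> P y"
  shows "dhom m 1 (\<lambda>x. if P x then 1 else 0)"
  using assms unfolding dhom_def by auto

lemma is_pushout_swap: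
  assumes "is_pushout A B C D a a' g h"
  shows "is_pushout A C B D a' a h g"
  unfolding is_pushout_def
proof (intro allI impI)
  fix k u v assume "dhom C k u" "dhom B k v" "deq A (u \<circ> a') (v \<circ> a)"
  moreover have "deq A (v \<circ> a) (u \<circ> a')" using calculation(3) by (simp add: deq_def)
  ultimately show "(\<exists>w. dhom D k w \<and> deq C (w \<circ> h) u \<and> deq B (w \<circ> g) v) \<and>
      (\<forall>w w'. dhom D k w \<longrightarrow> deq C (w \<circ> h) u \<longrightarrow> deq B (w \<circ> g) v \<longrightarrow>
        dhom D k w' \<longrightarrow> deq C (w' \<circ> h) u \<longrightarrow> deq B (w' \<circ> g) v \<longrightarrow> deq D w w')"
    using assms unfolding is_pushout_def by blast
qed

locale delta_square =
  fixes A B C D :: nat and a a' g h :: "nat \<Rightarrow> nat"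
  assumes dhom_a: "dhom A B a" and dhom_a': "dhom A C a'"
    and dhom_g: "dhom B D g" and dhom_h: "dhom C D h"
    and commutes: "\<And>z. z \<le> A \<Longrightarrow> g (a z) = h (a' z)"
begin

lemma swap: "delta_square A C B D a' a h g"
  using dhom_a dhom_a' dhom_g dhom_h commutes by unfold_locales auto

lemmas g_mono = dhom_mono[OF dhom_g]
  and h_mono = dhom_mono[OF dhom_h]

lemma pullback_fibres_not_both_multiple:
  assumes pb: "is_pullback A B C D a a' g h"
    and b: "b1 < b2" "b2 \<le> B" "g b1 = i" "g b2 = i"
    and c: "c1 < c2" "c2 \<le> C" "h c1 = i" "h c2 = i"
  shows False
proof -
  have lift: "\<exists>z. z \<le> A \<and> a z = b \<and> a' z = c" if "b \<le> B" "c \<le> C" "g b = h c" for b c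
  proof -
    have "dhom 0 B (\<lambda>_. b)" "dhom 0 C (\<lambda>_. c)" "deq 0 (g \<circ> (\<lambda>_. b)) (h \<circ> (\<lambda>_. c))"
      using that by (auto simp: dhom_def deq_def)
    then obtain w where "dhom 0 A w" "deq 0 (a \<circ> w) (\<lambda>_. b)" "deq 0 (a' \<circ> w) (\<lambda>_. c)"
      using pb unfolding is_pullback_def by blast
    then show ?thesis by (intro exI[of _ "w 0"]) (auto simp: dhom_def deq_def)
  qed
  obtain z1 where z1: "z1 \<le> A" "a z1 = b1" "a' z1 = c2" using lift[of b1 c2] b c by auto
  obtain z2 where z2: "z2 \<le> A" "a z2 = b2" "a' z2 = c1" using lift[of b2 c1] b c by auto
  show False
  proof (cases "z1 \<le> z2")
    case True
    then have "a' z1 \<le> a' z2" using dhom_mono[OF dhom_a'] z2 by blast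
    then show False using z1 z2 c by simp
  next
    case False
    then have "a z2 \<le> a z1" using dhom_mono[OF dhom_a, of z2 z1] z1 by simp
    then show False using z1 z2 b by simp
  qed
qed

lemma pushout_fibres_not_both_empty:
  assumes po: "is_pushout A B C D a a' g h" and "i \<le> D"
    and "\<And>b. b \<le> B \<Longrightarrow> g b \<noteq> i" and "\<And>c. c \<le> C \<Longrightarrow> h c \<noteq> i"
  shows False
proof -
  define w1 where "w1 y = (if i \<le> y then 1 else 0 :: nat)" for y
  define w2 where "w2 y = (if i < y then 1 else 0 :: nat)" for y
  have "dhom B 1 (w1 \<circ> g)" unfolding w1_def comp_def
    by (rule dhom_upset_indicator) (meson g_mono order_trans)
  moreover have "dhom C 1 (w1 \<circ> h)" unfolding w1_def comp_def
    by (rule dhom_upset_indicator) (meson h_mono order_trans)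
  moreover have "deq A ((w1 \<circ> g) \<circ> a) ((w1 \<circ> h) \<circ> a')" using commutes by (simp add: deq_def)
  ultimately have unique: "\<And>w w'. dhom D 1 w \<Longrightarrow> deq B (w \<circ> g) (w1 \<circ> g) \<Longrightarrow>
      deq C (w \<circ> h) (w1 \<circ> h) \<Longrightarrow> dhom D 1 w' \<Longrightarrow> deq B (w' \<circ> g) (w1 \<circ> g) \<Longrightarrow>
      deq C (w' \<circ> h) (w1 \<circ> h) \<Longrightarrow> deq D w w'"
    using po unfolding is_pushout_def by blast
  have "deq D w1 w2"
    by (rule unique) (use assms(3,4) in \<open>auto simp: deq_def dhom_def w1_def w2_def\<close>)
  then show False using \<open>i \<le> D\<close> by (auto simp: deq_def w1_def w2_def)
qed

lemma pushout_fibres_not_empty_and_multiple: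
  assumes po: "is_pushout A B C D a a' g h"
    and empty: "\<And>b. b \<le> B \<Longrightarrow> g b \<noteq> i"
    and c: "c1 < c2" "c2 \<le> C" "h c1 = i" "h c2 = i"
  shows False
proof -
  define u where "u b = (if i < g b then 1 else 0 :: nat)" for b
  define v where "v c = (if c2 \<le> c then 1 else 0 :: nat)" for c
  have "dhom B 1 u" unfolding u_def using g_mono
    by (intro dhom_upset_indicator) (meson order_less_le_trans)
  moreover have "dhom C 1 v" unfolding v_def by (rule dhom_upset_indicator) simp
  moreover have "deq A (u \<circ> a) (v \<circ> a')" unfolding deq_def
  proof (intro allI impI)
    fix z assume z: "z \<le> A"
    have az: "a z \<le> B" "a' z \<le> C" using z dhom_a dhom_a' unfolding dhom_def by auto
    show "(u \<circ> a) z = (v \<circ> a') z"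
    proof (cases "c2 \<le> a' z")
      case True
      then have "i \<le> h (a' z)" using h_mono[OF True az(2)] c by simp
      then show ?thesis using True empty[OF az(1)] commutes[OF z] by (simp add: u_def v_def)
    next
      case False
      then have "h (a' z) \<le> i" using h_mono[of "a' z" c2] c by simp
      then show ?thesis using False commutes[OF z] by (simp add: u_def v_def)
    qed
  qed
  ultimately obtain w where "deq C (w \<circ> h) v"
    using po unfolding is_pushout_def by blast
  then have "w (h c1) = v c1" "w (h c2) = v c2" using c unfolding deq_def by auto
  then show False using c by (simp add: v_def)
qed

lemma pushout_no_crossed_edge:
  assumes po: "is_pushout A B C D a a' g h" and i: "0 < i" "i \<le> D"
    and "\<And>b. b \<le> B \<Longrightarrow> g b \<noteq> i - 1" and "\<And>c. c \<le> C \<Longrightarrow> h c \<noteq> i"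
    and b: "b \<le> B" "g b = i" and c: "c \<le> C" "h c = i - 1"
  shows False
proof -
  define u where "u b = (if i < g b then 1 else 0 :: nat)" for b
  define v where "v c = (if i - 1 \<le> h c then 1 else 0 :: nat)" for c
  have "dhom B 1 u" unfolding u_def using g_mono
    by (intro dhom_upset_indicator) (meson order_less_le_trans)
  moreover have "dhom C 1 v" unfolding v_def using h_mono
    by (intro dhom_upset_indicator) (meson order_trans)
  moreover have "deq A (u \<circ> a) (v \<circ> a')" unfolding deq_def
  proof (intro allI impI)
    fix z assume z: "z \<le> A"
    have "a z \<le> B" "a' z \<le> C" using z dhom_a dhom_a' unfolding dhom_def by auto
    then have "g (a z) \<noteq> i - 1" "h (a' z) \<noteq> i" using assms(4,5) by auto
    then show "(u \<circ> a) z = (v \<circ> a') z" using commutes[OF z] i by (auto simp: u_def v_def)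
  qed
  ultimately obtain w where w: "dhom D 1 w" "deq B (w \<circ> g) u" "deq C (w \<circ> h) v"
    using po unfolding is_pushout_def by blast
  have "w i = 0" using w(2) b unfolding deq_def u_def by force
  moreover have "w (i - 1) = 1" using w(3) c unfolding deq_def v_def by force
  moreover have "w (i - 1) \<le> w i" using w(1) i unfolding dhom_def by auto
  ultimately show False by simp
qed

lemma biCartesian_fibres:
  assumes pb: "is_pullback A B C D a a' g h" and po: "is_pushout A B C D a a' g h" and "i \<le> D"
    and B_fibre: "\<nexists>j. {x. x \<le> B \<and> g x = i} = {j}"
    and C_fibre: "\<nexists>j. {x. x \<le> C \<and> h x = i} = {j}"
  shows False
  using B_fibre
proof (cases rule: not_singletonE)
  case 1
  then have B_empty: "\<And>b. b \<le> B \<Longrightarrow> g b \<noteq> i" by auto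
  from C_fibre show False
  proof (cases rule: not_singletonE)
    case 1
    then show False using pushout_fibres_not_both_empty[OF po \<open>i \<le> D\<close> B_empty] by auto
  next
    case (2 c1 c2)
    then show False using pushout_fibres_not_empty_and_multiple[OF po B_empty, of c1 c2] by auto
  qed
next
  case B: (2 b1 b2)
  from C_fibre show False
  proof (cases rule: not_singletonE)
    case 1
    then show False
      using delta_square.pushout_fibres_not_empty_and_multiple[OF swap is_pushout_swap[OF po], of i b1 b2] B
      by auto
  next
    case (2 c1 c2)
    then show False using pullback_fibres_not_both_multiple[OF pb, of b1 b2 i c1 c2] B by auto
  qed
qed

lemma biCartesian_edges:
  assumes po: "is_pushout A B C D a a' g h" and i: "0 < i" "i \<le> D"
    and "\<not> {i - 1, i} \<subseteq> g ` {0..B}" and "\<not> {i - 1, i} \<subseteq> h ` {0..C}"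
  shows False
proof -
  have B_miss: "(\<forall>b\<le>B. g b \<noteq> i - 1) \<or> (\<forall>b\<le>B. g b \<noteq> i)"
    and C_miss: "(\<forall>c\<le>C. h c \<noteq> i - 1) \<or> (\<forall>c\<le>C. h c \<noteq> i)"
    using assms(4,5) by (metis atLeastAtMost_iff empty_subsetI image_eqI insert_subset le0)+
  have hit: "(\<exists>b\<le>B. g b = j) \<or> (\<exists>c\<le>C. h c = j)" if "j \<le> D" for j
    using pushout_fibres_not_both_empty[OF po that] by blast
  show False
  proof (cases "\<forall>b\<le>B. g b \<noteq> i - 1")
    case True
    moreover have "i - 1 \<le> D" using i by simp
    ultimately obtain c where c: "c \<le> C" "h c = i - 1" using hit[of "i - 1"] by blast
    then have C_i: "\<forall>c\<le>C. h c \<noteq> i" using C_miss by auto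
    then obtain b where "b \<le> B" "g b = i" using hit[of i] i by auto
    then show False using pushout_no_crossed_edge[OF po i _ _ _ _ c] True C_i by blast
  next
    case False
    then obtain b where b: "b \<le> B" "g b = i - 1" by auto
    have B_i: "\<forall>b\<le>B. g b \<noteq> i" using B_miss False by auto
    then obtain c where c: "c \<le> C" "h c = i" using hit[of i] i by auto
    then have "\<forall>c\<le>C. h c \<noteq> i - 1" using C_miss by auto
    then show False
      using delta_square.pushout_no_crossed_edge[OF swap is_pushout_swap[OF po] i _ _ c b] B_i by blast
  qed
qed

end

lemma deq_fibres_eq: "deq m g \<phi> \<Longrightarrow> {x. x \<le> m \<and> g x = i} = {x. x \<le> m \<and> \<phi> x = i}"
  unfolding deq_def by auto

lemma deq_image_eq: "deq m g \<phi> \<Longrightarrow> g ` {0..m} = \<phi> ` {0..m}"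
  unfolding deq_def by (intro image_cong) auto

lemma is_cube_delta_square:
  assumes cube: "is_cube S Qo Qm" and "s \<in> S" "s' \<in> S"
  shows "delta_square (Qo {s, s'}) (Qo {s}) (Qo {s'}) (Qo {})
    (Qm {s, s'} {s}) (Qm {s, s'} {s'}) (Qm {s} {}) (Qm {s'} {})"
proof
  have dhom: "dhom (Qo T') (Qo T) (Qm T' T)" if "T \<subseteq> T'" "T' \<subseteq> S" for T T'
    using conjunct1[OF cube[unfolded is_cube_def]] that by blast
  show "dhom (Qo {s, s'}) (Qo {s}) (Qm {s, s'} {s})" "dhom (Qo {s, s'}) (Qo {s'}) (Qm {s, s'} {s'})"
    "dhom (Qo {s}) (Qo {}) (Qm {s} {})" "dhom (Qo {s'}) (Qo {}) (Qm {s'} {})"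
    using assms(2,3) by (auto intro: dhom)
  have comp: "Qm {s, s'} {} z = Qm T {} (Qm {s, s'} T z)" if "T \<subseteq> {s, s'}" "z \<le> Qo {s, s'}" for T z
  proof -
    have "deq (Qo {s, s'}) (Qm {s, s'} {}) (Qm T {} \<circ> Qm {s, s'} T)"
      using conjunct2[OF conjunct2[OF cube[unfolded is_cube_def]], rule_format, of "{}" T "{s, s'}"]
        that(1) assms(2,3) by blast
    then show ?thesis using that(2) unfolding deq_def by simp
  qed
  show "Qm {s} {} (Qm {s, s'} {s} z) = Qm {s'} {} (Qm {s, s'} {s'} z)" if "z \<le> Qo {s, s'}" for z
    using comp[of "{s}" z] comp[of "{s'}" z] that by simp
qed

lemma strongly_biCartesian_base_square:
  assumes "strongly_biCartesian S n I f" "s \<in> S" "s' \<in> S" "s \<noteq> s'"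
  obtains A a a' g h where "delta_square A (I s) (I s') n a a' g h"
    "is_pullback A (I s) (I s') n a a' g h" "is_pushout A (I s) (I s') n a a' g h"
    "deq (I s) g (f s)" "deq (I s') h (f s')"
proof -
  obtain Qo Qm where cube: "is_cube S Qo Qm" and "Qo {} = n"
    and singletons: "\<forall>s\<in>S. Qo {s} = I s \<and> deq (I s) (Qm {s} {}) (f s)"
    and squares: "\<forall>T s s'. s \<in> S \<longrightarrow> s' \<in> S \<longrightarrow> s \<noteq> s' \<longrightarrow> T \<subseteq> S - {s, s'} \<longrightarrow>
           is_pullback (Qo (T \<union> {s, s'})) (Qo (T \<union> {s})) (Qo (T \<union> {s'})) (Qo T)
              (Qm (T \<union> {s, s'}) (T \<union> {s})) (Qm (T \<union> {s, s'}) (T \<union> {s'}))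
              (Qm (T \<union> {s}) T) (Qm (T \<union> {s'}) T) \<and>
           is_pushout (Qo (T \<union> {s, s'})) (Qo (T \<union> {s})) (Qo (T \<union> {s'})) (Qo T)
              (Qm (T \<union> {s, s'}) (T \<union> {s})) (Qm (T \<union> {s, s'}) (T \<union> {s'}))
              (Qm (T \<union> {s}) T) (Qm (T \<union> {s'}) T)"
    using assms(1) unfolding strongly_biCartesian_def by blast
  have Qo: "Qo {} = n" "Qo {s} = I s" "Qo {s'} = I s'" using \<open>Qo {} = n\<close> singletons assms by auto
  show thesis
  proof (rule that)
    show "delta_square (Qo {s, s'}) (I s) (I s') n (Qm {s, s'} {s}) (Qm {s, s'} {s'}) (Qm {s} {}) (Qm {s'} {})"
      using is_cube_delta_square[OF cube assms(2,3)] unfolding Qo .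
    show "is_pullback (Qo {s, s'}) (I s) (I s') n (Qm {s, s'} {s}) (Qm {s, s'} {s'}) (Qm {s} {}) (Qm {s'} {})"
      "is_pushout (Qo {s, s'}) (I s) (I s') n (Qm {s, s'} {s}) (Qm {s, s'} {s'}) (Qm {s} {}) (Qm {s'} {})"
      using squares[rule_format, OF assms(2-4) empty_subsetI, unfolded Un_empty_left Qo] by auto
    show "deq (I s) (Qm {s} {}) (f s)" "deq (I s') (Qm {s'} {}) (f s')" using singletons assms by auto
  qed
qed

lemma strongly_biCartesian_imp_compatible:
  assumes "strongly_biCartesian S n I f"
  shows "compatible S n I f"
  unfolding compatible_def
proof (intro conjI allI impI ballI)
  fix i s s' assume "i \<le> n" "s \<in> S" "s' \<in> S"
    and fibres: "\<nexists>j. {x. x \<le> I s \<and> f s x = i} = {j}" "\<nexists>j. {x. x \<le> I s' \<and> f s' x = i} = {j}"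
  show "s = s'"
  proof (rule ccontr)
    assume "s \<noteq> s'"
    with assms \<open>s \<in> S\<close> \<open>s' \<in> S\<close> obtain A a a' g h where
      square: "delta_square A (I s) (I s') n a a' g h"
      "is_pullback A (I s) (I s') n a a' g h" "is_pushout A (I s) (I s') n a a' g h"
      and "deq (I s) g (f s)" "deq (I s') h (f s')"
      by (rule strongly_biCartesian_base_square)
    then show False
      using delta_square.biCartesian_fibres[OF square \<open>i \<le> n\<close>] fibres by (simp add: deq_fibres_eq)
  qed
next
  fix i s s' assume "0 < i" "i \<le> n" "s \<in> S" "s' \<in> S"
    and edges: "\<not> {i - 1, i} \<subseteq> f s ` {0..I s}" "\<not> {i - 1, i} \<subseteq> f s' ` {0..I s'}"
  show "s = s'"
  proof (rule ccontr)
    assume "s \<noteq> s'"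
    with assms \<open>s \<in> S\<close> \<open>s' \<in> S\<close> obtain A a a' g h where
      square: "delta_square A (I s) (I s') n a a' g h" "is_pushout A (I s) (I s') n a a' g h"
      and "deq (I s) g (f s)" "deq (I s') h (f s')"
      by (rule strongly_biCartesian_base_square)
    then show False
      using delta_square.biCartesian_edges[OF square \<open>0 < i\<close> \<open>i \<le> n\<close>] edges
      by (simp add: deq_image_eq)
  qed
qed

theorem corollary4p1p5:
  fixes S :: "'s set" and n :: nat and I :: "'s \<Rightarrow> nat" and f :: "'s \<Rightarrow> nat \<Rightarrow> nat"
  assumes "finite S"
    and "\<forall>s\<in>S. dhom (I s) n (f s)"
  shows "strongly_biCartesian S n I f \<longleftrightarrow> compatible S n I f"
proof
  assume "strongly_biCartesian S n I f"
  then show "compatible S n I f" by (rule strongly_biCartesian_imp_compatible)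
next
  assume "compatible S n I f"
  with assms interpret compatible_claw S n I f by unfold_locales auto
  show "strongly_biCartesian S n I f" by (rule strongly_biCartesian)
qed

end
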